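(* For every $\varepsilon>0$ there is a constant $C_\varepsilon$ (depending only on $\varepsilon$) such that for every $n$-state NFA $\mathcal{A}=(\Sigma,Q,I,F,\delta)$ and every symbol $a\in\Sigma$, $$\|\mathcal{A}\|\le C_\varepsilon\,|\Sigma|\,\bigl(c(\mathcal{G}(T^{(a)}))+n^2\bigr)\max_{b\in\Sigma\setminus\{a\}}2^{\operatorname{rank}(T^{(b)})^2/(4-\varepsilon)},$$ i.e., $\|\mathcal{A}\|\in O\!\left(|\Sigma|(c(\mathcal{G}(T^{(a)}))+n^2)\max_{b\in\Sigma\setminus\{a\}}2^{\operatorname{rank}(T^{(b)})^2/(4-\varepsilon)}\right)$.
   Context: An NFA is $\mathcal{A}=(\Sigma,Q,I,F,\delta)$ with finite alphabet $\Sigma$, state set $Q=\{q_1,\dots,q_n\}$, transitions $\delta\subseteq Q\times\Sigma\times Q$ ($\varepsilon$-free). Over the Boolean semifield $\mathbb{B}=(\{0,1\},\vee,\wedge,0,1)$, the transition matrix $T^{(w)}\in\mathbb{B}^{n\times n}$ has $T^{(w)}_{i,j}=1$ iff $(q_i,w,q_j)\in\delta$. The range $\mathcal{R}(T)=\{Tv:v\in\mathbb{B}^n\}$. For $\mathcal{J}\subseteq\Sigma$, $\mathcal{M}(\mathcal{J})$ is the monoid generated by $\{T^{(w)}:w\in\mathcal{J}\}$ under Boolean matrix multiplication (containing the identity). The subset complexity is $\|\mathcal{A}\|=\min_{\mathcal{J}\subseteq\Sigma}\bigl(1+\sum_{w\in\Sigma\setminus\mathcal{J}}|\mathcal{R}(T^{(w)})|\bigr)|\mathcal{M}(\mathcal{J})|$.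 $\operatorname{rank}(T)$ is the rank of the 0/1 matrix $T$ over the field $\mathbb{F}_2$. The precedence graph $\mathcal{G}(A)$ of an $n\times n$ Boolean matrix $A$ is the directed graph on vertices $\{1,\dots,n\}$ with an edge $i\to j$ iff $A_{i,j}=1$. The cyclicity of a strongly connected component is the greatest common divisor of the lengths of all its cycles, and the cyclicity $c(\mathcal{G})$ of a directed graph is the least common multiple of the cyclicities of its maximal strongly connected components that contain at least one cycle. *)

theory Defs
  imports "HOL-Library.Z2" "Jordan_Normal_Form.DL_Rank"
begin

text \<open>Boolean n x n matrices are functions nat => nat => bool whose entries
  outside {0..<n} x {0..<n} are False; states of an n-state NFA are 0..n-1.\<close>

type_synonym bmat = "nat \<Rightarrow> nat \<Rightarrow> bool"

definition bmult :: "nat \<Rightarrow> bmat \<Rightarrow> bmat \<Rightarrow> bmat" where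
  "bmult n A B = (\<lambda>i j. \<exists>k<n. A i k \<and> B k j)"

definition bid :: "nat \<Rightarrow> bmat" where
  "bid n = (\<lambda>i j. i = j \<and> i < n)"

inductive_set bmonoid :: "nat \<Rightarrow> bmat set \<Rightarrow> bmat set" for n G where
  unit: "bid n \<in> bmonoid n G"
| step: "A \<in> bmonoid n G \<Longrightarrow> g \<in> G \<Longrightarrow> bmult n A g \<in> bmonoid n G"

definition brange :: "nat \<Rightarrow> bmat \<Rightarrow> (nat \<Rightarrow> bool) set" where
  "brange n T = {(\<lambda>i. \<exists>j<n. T i j \<and> v j) | v. \<forall>j. v j \<longrightarrow> j < n}"

definition nfa :: "nat \<Rightarrow> 'a set \<Rightarrow> nat set \<Rightarrow> nat set \<Rightarrow> (nat \<times> 'a \<times> nat) set \<Rightarrow> bool" where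
  "nfa n \<Sigma> I F \<delta> \<longleftrightarrow> finite \<Sigma> \<and> I \<subseteq> {..<n} \<and> F \<subseteq> {..<n} \<and> \<delta> \<subseteq> {..<n} \<times> \<Sigma> \<times> {..<n}"

definition trans_mat :: "(nat \<times> 'a \<times> nat) set \<Rightarrow> 'a \<Rightarrow> bmat" where
  "trans_mat \<delta> w = (\<lambda>i j. (i, w, j) \<in> \<delta>)"

definition subset_complexity :: "nat \<Rightarrow> 'a set \<Rightarrow> (nat \<times> 'a \<times> nat) set \<Rightarrow> nat" where
  "subset_complexity n \<Sigma> \<delta> =
     Min ((\<lambda>J. (1 + (\<Sum>w\<in>\<Sigma> - J. card (brange n (trans_mat \<delta> w))))
                 * card (bmonoid n (trans_mat \<delta> ` J))) ` Pow \<Sigma>)"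

definition to_F2_mat :: "nat \<Rightarrow> bmat \<Rightarrow> bit mat" where
  "to_F2_mat n T = mat n n (\<lambda>(i, j). if T i j then 1 else 0)"

definition rank_F2 :: "nat \<Rightarrow> bmat \<Rightarrow> nat" where
  "rank_F2 n T = vec_space.rank n (to_F2_mat n T)"

definition prec_edges :: "nat \<Rightarrow> bmat \<Rightarrow> (nat \<times> nat) set" where
  "prec_edges n A = {(i, j). i < n \<and> j < n \<and> A i j}"

definition sccs :: "nat \<Rightarrow> bmat \<Rightarrow> nat set set" where
  "sccs n A = (\<lambda>i. {j. (i, j) \<in> (prec_edges n A)\<^sup>* \<and> (j, i) \<in> (prec_edges n A)\<^sup>*}) ` {..<n}"

definition cycle_lengths :: "nat \<Rightarrow> bmat \<Rightarrow> nat set \<Rightarrow> nat set" where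
  "cycle_lengths n A C = {length vs | vs. vs \<noteq> [] \<and> distinct vs \<and> set vs \<subseteq> C \<and>
      (\<forall>k<length vs. (vs ! k, vs ! ((k + 1) mod length vs)) \<in> prec_edges n A)}"

definition cyclicity :: "nat \<Rightarrow> bmat \<Rightarrow> nat" where
  "cyclicity n A = Lcm {Gcd (cycle_lengths n A C) | C. C \<in> sccs n A \<and> cycle_lengths n A C \<noteq> {}}"

end

theory Submission
  imports Defs "HOL-Library.Function_Algebras" "HOL-Number_Theory.Cong"
begin

text \<open>
  Taking \<open>\<J> = {a}\<close> bounds the subset complexity by \<open>(1 + \<Sum>b\<noteq>a. |R(T b)|) * |M({T a})|\<close>.

  Powers of a Boolean \<open>n \<times> n\<close> matrix \<open>A\<close> with cyclicity \<open>c\<close> satisfy \<open>A^(k + c) = A^k\<close> for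
  \<open>k \<ge> 35 n\<^sup>2\<close>, so \<open>|M({A})| \<le> 35 n\<^sup>2 + c\<close>. Indeed, a walk of length \<open>k \<ge> n\<close> visits a vertex \<open>v\<close> on
  a cycle; cutting out closed subwalks shortens it to a walk through \<open>v\<close> of length \<open>\<le> 10 n\<^sup>2\<close>
  without changing its length modulo the gcd \<open>d\<close> of the short closed walks at \<open>v\<close>. The lengths of
  closed walks at \<open>v\<close> form an additive monoid containing every multiple of \<open>d\<close> above \<open>25 n\<^sup>2\<close>, so
  inserting a closed walk at \<open>v\<close> reaches every length \<open>\<ge> 35 n\<^sup>2\<close> congruent to \<open>k\<close> modulo \<open>d\<close>; and
  \<open>d\<close> divides \<open>c\<close>.

  For the range, choose \<open>r = rank T\<close> columns \<open>J\<close> spanning the column space of \<open>T\<close> over \<open>GF(2)\<close>.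
  A vector \<open>U = T v\<close> is determined by the \<open>GF(2)\<close>-span of the rows of \<open>T\<close>, restricted to \<open>J\<close>, that
  are indexed by the zeros of \<open>U\<close>: row \<open>i\<close> lies in this span iff \<open>U i = 0\<close>, because if
  \<open>T i j = v j = 1\<close> then the functional expressing column \<open>j\<close> through the columns \<open>J\<close> vanishes on
  the span but not on row \<open>i\<close>. Hence \<open>|R(T)|\<close> is at most the number of subspaces of \<open>GF(2)^r\<close>,
  which is at most \<open>\<Sum>k\<le>r. 2^(k(r - k) + r) \<le> 2^(r\<^sup>2/4 + 2r) \<le> C\<^sub>\<epsilon> 2^(r\<^sup>2/(4 - \<epsilon>))\<close>.
\<close>

section \<open>Additively closed sets of natural numbers\<close>

lemma cong_small_multiple:
  fixes b g m :: nat
  assumes "g \<noteq> 0" and "gcd b g dvd m"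
  shows "\<exists>t < g div gcd b g. [t * b = m] (mod g)"
proof -
  define d where "d = gcd b g"
  obtain \<beta> where b: "b = d * \<beta>" unfolding d_def by (meson dvdE gcd_dvd1)
  obtain \<rho> where g: "g = d * \<rho>" unfolding d_def by (meson dvdE gcd_dvd2)
  obtain \<mu> where m: "m = d * \<mu>" using assms(2) by (auto simp: d_def)
  obtain x where x: "[b * x = d] (mod g)" using cong_solve_nat[of b g] by (auto simp: d_def)
  have "0 < \<rho>" "\<rho> = g div d" using assms(1) g by auto
  define t where "t = (x * \<mu>) mod \<rho>"
  have "[b * (x * \<mu>) = m] (mod g)" using cong_mult[OF x cong_refl[of \<mu>]] by (simp add: m mult.assoc)
  moreover have "b * (x * \<mu>) = t * b + g * (\<beta> * (x * \<mu> div \<rho>))"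
  proof -
    have "b * (x * \<mu>) = b * (t + \<rho> * (x * \<mu> div \<rho>))" by (simp add: t_def)
    then show ?thesis by (simp add: b g algebra_simps)
  qed
  ultimately have "[t * b = m] (mod g)" by (simp add: cong_def)
  moreover have "t < \<rho>" using \<open>0 < \<rho>\<close> by (simp add: t_def)
  ultimately show ?thesis using \<open>\<rho> = g div d\<close> d_def by blast
qed

lemma mult_mem_add_closed:
  assumes "0 \<in> S" "\<And>x y. x \<in> S \<Longrightarrow> y \<in> S \<Longrightarrow> x + y \<in> S" "(x::nat) \<in> S"
  shows "q * x \<in> S"
proof (induction q)
  case (Suc q)
  then show ?case using assms(2)[OF assms(3) Suc] by simp
qed (simp add: assms(1))

lemma small_multiple_threshold:
  fixes b g t N :: nat
  assumes "t < g div gcd b g" "b \<le> N" "0 < g" "g \<le> N"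
  shows "t * b + N * (N div g) \<le> N * (N div gcd b g)"
proof -
  define \<rho> where "\<rho> = g div gcd b g"
  define q where "q = N div g"
  have "1 \<le> q" using assms(3,4) by (simp add: q_def Suc_le_eq div_greater_zero_iff)
  have "gcd b g * (\<rho> * q) = g * q" by (simp add: \<rho>_def)
  also have "\<dots> \<le> N" by (simp add: q_def)
  finally have "\<rho> * q \<le> N div gcd b g" using div_le_mono[of _ N "gcd b g"] assms(3) by fastforce
  have "t * b \<le> (\<rho> - 1) * N" using assms(1,2) by (intro mult_le_mono) (auto simp: \<rho>_def)
  then have "t * b + N * q \<le> N * (q + (\<rho> - 1))" by (simp add: distrib_left mult.commute)
  also have "\<dots> \<le> N * (\<rho> * q)" using \<open>1 \<le> q\<close> assms(1) by (cases \<rho>) (auto simp: \<rho>_def)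
  also have "\<dots> \<le> N * (N div gcd b g)" using \<open>\<rho> * q \<le> N div gcd b g\<close> by simp
  finally show ?thesis by (simp add: q_def)
qed

lemma add_closed_contains_multiples:
  fixes S G :: "nat set"
  assumes S0: "0 \<in> S" and S_add: "\<And>x y. x \<in> S \<Longrightarrow> y \<in> S \<Longrightarrow> x + y \<in> S"
    and "finite G" "G \<subseteq> S" "0 \<notin> G" "\<forall>x\<in>G. x \<le> N"
  shows "Gcd G dvd m \<Longrightarrow> N * (N div Gcd G) \<le> m \<Longrightarrow> m \<in> S"
  using assms(3-6)
proof (induction G arbitrary: m rule: finite_induct)
  case empty
  then show ?case using S0 by simp
next
  case (insert b G)
  have "b \<in> S" "b \<le> N" using insert.prems by auto
  show ?case
  proof (cases "G = {}")
    case True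
    then have "b dvd m" using insert.prems(1) by simp
    then obtain q where "m = q * b" by (metis dvdE mult.commute)
    then show ?thesis using mult_mem_add_closed[OF S0 S_add \<open>b \<in> S\<close>] by simp
  next
    case False
    define g where "g = Gcd G"
    have g_eq: "Gcd (insert b G) = gcd b g" by (simp add: g_def)
    obtain a where "a \<in> G" using False by blast
    then have "g dvd a" "a \<noteq> 0" "a \<le> N" using insert.prems by (auto simp: g_def) (metis neq0_conv)
    then have "0 < g" "g \<le> N" by (auto intro: gr0I dest: dvd_imp_le)
    \<comment> \<open>Split \<open>m = t b + (m - t b)\<close>, where \<open>t\<close> makes \<open>m - t b\<close> divisible by \<open>Gcd G\<close> and is small
      enough to keep \<open>m - t b\<close> above the threshold for \<open>G\<close>.\<close>
    obtain t where t: "t < g div gcd b g" "[t * b = m] (mod g)"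
      using cong_small_multiple[of g b m] \<open>0 < g\<close> insert.prems(1) g_eq by auto
    have bound: "t * b + N * (N div g) \<le> m"
      using small_multiple_threshold[OF t(1) \<open>b \<le> N\<close> \<open>0 < g\<close> \<open>g \<le> N\<close>] insert.prems(2)
      unfolding g_eq by linarith
    have rest: "m - t * b \<in> S"
    proof (rule insert.IH)
      show "Gcd G dvd m - t * b"
        using cong_sym[OF t(2)] bound by (simp add: g_def cong_altdef_nat)
      show "N * (N div Gcd G) \<le> m - t * b" using bound by (simp add: g_def)
      show "G \<subseteq> S" "0 \<notin> G" "\<forall>x\<in>G. x \<le> N" using insert.prems by auto
    qed
    have "t * b \<in> S" using mult_mem_add_closed[OF S0 S_add \<open>b \<in> S\<close>] .
    with rest have "(m - t * b) + t * b \<in> S" by (rule S_add)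
    then show ?thesis using bound by simp
  qed
qed

section \<open>Walks and powers of Boolean matrices\<close>

definition walk :: "nat \<Rightarrow> bmat \<Rightarrow> (nat \<Rightarrow> nat) \<Rightarrow> nat \<Rightarrow> bool" where
  "walk n A f m \<longleftrightarrow> (\<forall>k\<le>m. f k < n) \<and> (\<forall>k<m. A (f k) (f (Suc k)))"

definition bpow :: "nat \<Rightarrow> bmat \<Rightarrow> nat \<Rightarrow> bmat" where
  "bpow n A m = ((\<lambda>X. bmult n X A) ^^ m) (bid n)"

lemma walk_shift:
  assumes "walk n A f m" "a \<le> b" "b \<le> m"
  shows "walk n A (\<lambda>k. f (a + k)) (b - a)"
  using assms unfolding walk_def by auto

lemma walk_prefix: "walk n A f m \<Longrightarrow> s \<le> m \<Longrightarrow> walk n A f s"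
  unfolding walk_def by auto

lemma walk_append:
  assumes f: "walk n A f m1" and g: "walk n A g m2" and "f m1 = g 0"
  shows "walk n A (\<lambda>k. if k \<le> m1 then f k else g (k - m1)) (m1 + m2)"
  unfolding walk_def
proof (intro conjI allI impI)
  fix k assume "k \<le> m1 + m2"
  then show "(if k \<le> m1 then f k else g (k - m1)) < n" using f g unfolding walk_def by auto
next
  fix k assume k: "k < m1 + m2"
  consider "Suc k \<le> m1" | "k = m1" | "m1 < k" by linarith
  then show "A (if k \<le> m1 then f k else g (k - m1)) (if Suc k \<le> m1 then f (Suc k) else g (Suc k - m1))"
  proof cases
    case 3
    then have "k - m1 < m2" "Suc k - m1 = Suc (k - m1)" using k by auto
    then show ?thesis using g 3 unfolding walk_def by auto
  qed (use f g k \<open>f m1 = g 0\<close> in \<open>auto simp: walk_def\<close>)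
qed

lemma walk_join:
  assumes "walk n A f m1" "walk n A g m2" "f m1 = g 0"
  shows "\<exists>h. walk n A h (m1 + m2) \<and> h 0 = f 0 \<and> h (m1 + m2) = g m2"
  using walk_append[OF assms] assms(3) by (intro exI) (auto simp: le_Suc_eq)

lemma bpow_iff_walk:
  assumes A: "\<And>i j. A i j \<Longrightarrow> i < n \<and> j < n"
  shows "bpow n A m i j \<longleftrightarrow> (\<exists>f. walk n A f m \<and> f 0 = i \<and> f m = j)"
proof (induction m arbitrary: j)
  case 0
  have "walk n A (\<lambda>_. i) 0 \<longleftrightarrow> i < n" by (simp add: walk_def)
  then show ?case by (auto simp: bpow_def bid_def walk_def)
next
  case (Suc m)
  have "bpow n A (Suc m) i j \<longleftrightarrow> (\<exists>k<n. bpow n A m i k \<and> A k j)"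
    by (simp add: bpow_def bmult_def)
  also have "\<dots> \<longleftrightarrow> (\<exists>f. walk n A f (Suc m) \<and> f 0 = i \<and> f (Suc m) = j)"
  proof
    assume "\<exists>k<n. bpow n A m i k \<and> A k j"
    then obtain k f where "walk n A f m" "f 0 = i" "f m = k" "A k j" using Suc.IH by blast
    moreover have "j < n" using \<open>A k j\<close> A by blast
    ultimately have "walk n A (f(Suc m := j)) (Suc m)" by (auto simp: walk_def less_Suc_eq le_Suc_eq)
    then show "\<exists>f. walk n A f (Suc m) \<and> f 0 = i \<and> f (Suc m) = j" using \<open>f 0 = i\<close> by (intro exI) auto
  next
    assume "\<exists>f. walk n A f (Suc m) \<and> f 0 = i \<and> f (Suc m) = j"
    then obtain f where f: "walk n A f (Suc m)" "f 0 = i" "f (Suc m) = j" by blast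
    then have "walk n A f m" "f m < n" "A (f m) j" by (auto simp: walk_def)
    then show "\<exists>k<n. bpow n A m i k \<and> A k j" using Suc.IH f(2) by blast
  qed
  finally show ?case .
qed

lemma walk_rtrancl:
  assumes "walk n A f m" "a \<le> b" "b \<le> m"
  shows "(f a, f b) \<in> (prec_edges n A)\<^sup>*"
  using assms(2,3)
proof (induction b)
  case (Suc b)
  then show ?case
  proof (cases "a = Suc b")
    case False
    then have "(f a, f b) \<in> (prec_edges n A)\<^sup>*" using Suc by simp
    moreover have "(f b, f (Suc b)) \<in> prec_edges n A"
      using assms(1) Suc.prems unfolding walk_def prec_edges_def by auto
    ultimately show ?thesis by simp
  qed simp
qed simp

lemma rtrancl_walk:
  assumes "(i, j) \<in> (prec_edges n A)\<^sup>*" "i < n"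
  shows "\<exists>m f. walk n A f m \<and> f 0 = i \<and> f m = j"
  using assms(1)
proof (induction rule: rtrancl_induct)
  case base
  show ?case using assms(2) by (intro exI[of _ 0] exI[of _ "\<lambda>_. i"]) (simp add: walk_def)
next
  case (step j k)
  then obtain m f where f: "walk n A f m" "f 0 = i" "f m = j" by blast
  have "j < n" "k < n" "A j k" using step(2) by (auto simp: prec_edges_def)
  then have "walk n A (f(Suc m := k)) (Suc m)"
    using f unfolding walk_def by (auto simp: less_Suc_eq le_Suc_eq)
  then show ?case using f(2) by (intro exI) auto
qed

lemma pigeonhole_pair:
  fixes f :: "nat \<Rightarrow> nat"
  assumes "finite S" "n * D < card S" "\<forall>k\<in>S. f k < n" "0 < D"
  shows "\<exists>s\<in>S. \<exists>t\<in>S. s < t \<and> f s = f t \<and> [s = t] (mod D)"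
proof -
  let ?g = "\<lambda>k. (f k, k mod D)"
  have "?g ` S \<subseteq> {..<n} \<times> {..<D}" using assms by auto
  then have "card (?g ` S) \<le> n * D" by (metis card_lessThan card_cartesian_product card_mono finite_SigmaI finite_lessThan)
  then have "\<not> inj_on ?g S" using assms(2) by (metis card_image not_le)
  then obtain s t where "s \<in> S" "t \<in> S" "s \<noteq> t" "f s = f t" "[s = t] (mod D)"
    unfolding inj_on_def cong_def by blast
  then show ?thesis by (metis cong_sym linorder_neqE_nat)
qed

text \<open>By pigeonhole on pairs (vertex, position mod \<open>D\<close>), the longer side of \<open>p\<close> contains a closed
  subwalk of length divisible by \<open>D\<close>; cut it out.\<close>
lemma walk_shorten_step:
  assumes f: "walk n A f m" and "p \<le> m" "0 < D" "2 * n * D < m"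
  shows "\<exists>g m' p'. walk n A g m' \<and> g 0 = f 0 \<and> g m' = f m \<and> p' \<le> m' \<and> g p' = f p \<and>
    m' < m \<and> [m' = m] (mod D)"
proof -
  have f_lt: "\<forall>k\<in>{0..m}. f k < n" using f unfolding walk_def by auto
  obtain s t where st: "s < t" "t \<le> m" "f s = f t" "[s = t] (mod D)" and side: "t \<le> p \<or> p \<le> s"
  proof (cases "n * D \<le> p")
    case True
    then obtain s t where "s \<in> {0..p}" "t \<in> {0..p}" "s < t" "f s = f t" "[s = t] (mod D)"
      using pigeonhole_pair[of "{0..p}" n D f] f_lt \<open>p \<le> m\<close> \<open>0 < D\<close> by force
    then show thesis using that \<open>p \<le> m\<close> by auto
  next
    case False
    then obtain s t where "s \<in> {p..m}" "t \<in> {p..m}" "s < t" "f s = f t" "[s = t] (mod D)"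
      using pigeonhole_pair[of "{p..m}" n D f] f_lt \<open>0 < D\<close> assms(4) by force
    then show thesis using that by auto
  qed
  define g where "g = (\<lambda>k. if k \<le> s then f k else f (t + (k - s)))"
  define m' where "m' = s + (m - t)"
  have "walk n A g m'"
    using walk_append[OF walk_prefix[OF f] walk_shift[OF f, of t m]] st
    unfolding g_def m'_def by simp
  moreover have "g 0 = f 0" by (simp add: g_def)
  moreover have "g m' = f m"
    using st by (cases "m = t") (auto simp: g_def m'_def)
  moreover have "m' < m" using st by (simp add: m'_def)
  moreover have "[m' = m] (mod D)"
  proof -
    have "[s + (m - t) = t + (m - t)] (mod D)" using st(4) by (rule cong_add) simp
    then show ?thesis using st(2) by (simp add: m'_def)
  qed
  moreover have "\<exists>p'\<le>m'. g p' = f p"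
  proof (cases "t \<le> p")
    case True
    then show ?thesis
      using st \<open>p \<le> m\<close> by (intro exI[of _ "s + (p - t)"]) (cases "p = t"; auto simp: g_def m'_def)
  next
    case False
    then show ?thesis using side st by (intro exI[of _ p]) (auto simp: g_def m'_def)
  qed
  ultimately show ?thesis by blast
qed

lemma walk_shorten:
  assumes "0 < D"
  shows "walk n A f m \<Longrightarrow> p \<le> m \<Longrightarrow>
    \<exists>g m' p'. walk n A g m' \<and> g 0 = f 0 \<and> g m' = f m \<and> p' \<le> m' \<and> g p' = f p \<and>
      [m' = m] (mod D) \<and> m' \<le> 2 * n * D"
proof (induction m arbitrary: f p rule: less_induct)
  case (less m)
  show ?case
  proof (cases "m \<le> 2 * n * D")
    case False
    then obtain g m' p' where g: "walk n A g m'" "g 0 = f 0" "g m' = f m" "p' \<le> m'" "g p' = f p"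
      "m' < m" "[m' = m] (mod D)"
      using walk_shorten_step[OF less.prems assms] by auto
    from less.IH[OF g(6,1,4)] g(2-5,7) show ?thesis by (metis cong_trans)
  qed (use less.prems in \<open>blast intro: cong_refl\<close>)
qed

lemma reachable_short_walk:
  assumes "(i, j) \<in> (prec_edges n A)\<^sup>*" "i < n"
  shows "\<exists>m f. walk n A f m \<and> f 0 = i \<and> f m = j \<and> m \<le> 2 * n"
proof -
  obtain m f where "walk n A f m" "f 0 = i" "f m = j" using rtrancl_walk[OF assms] by blast
  then show ?thesis using walk_shorten[of 1 n A f m 0] by fastforce
qed

section \<open>Closed walks and the cyclicity\<close>

definition closed_walk_lengths :: "nat \<Rightarrow> bmat \<Rightarrow> nat \<Rightarrow> nat set" where
  "closed_walk_lengths n A v = {m. \<exists>f. walk n A f m \<and> f 0 = v \<and> f m = v}"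

definition on_cycle :: "nat \<Rightarrow> bmat \<Rightarrow> nat \<Rightarrow> bool" where
  "on_cycle n A v \<longleftrightarrow> v < n \<and> (\<exists>m>0. m \<in> closed_walk_lengths n A v)"

text \<open>Only closed walks of length at most \<open>5 n\<close> enter the gcd: this keeps the generating set finite
  and bounded, as \<open>add_closed_contains_multiples\<close> requires, and still every cycle of the strongly
  connected component of \<open>v\<close> is seen (\<open>cycle_detour\<close>).\<close>
definition local_period :: "nat \<Rightarrow> bmat \<Rightarrow> nat \<Rightarrow> nat" where
  "local_period n A v = Gcd {m \<in> closed_walk_lengths n A v. 0 < m \<and> m \<le> 5 * n}"

definition scc_of :: "nat \<Rightarrow> bmat \<Rightarrow> nat \<Rightarrow> nat set" where
  "scc_of n A v = {j. (v, j) \<in> (prec_edges n A)\<^sup>* \<and> (j, v) \<in> (prec_edges n A)\<^sup>*}"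

lemma closed_walk_lengths_add:
  assumes "a \<in> closed_walk_lengths n A v" "b \<in> closed_walk_lengths n A v"
  shows "a + b \<in> closed_walk_lengths n A v"
proof -
  obtain f g where "walk n A f a" "f 0 = v" "f a = v" "walk n A g b" "g 0 = v" "g b = v"
    using assms unfolding closed_walk_lengths_def by blast
  then show ?thesis using walk_join[of n A f a g b] unfolding closed_walk_lengths_def by auto
qed

lemma zero_in_closed_walk_lengths: "v < n \<Longrightarrow> 0 \<in> closed_walk_lengths n A v"
  unfolding closed_walk_lengths_def walk_def by (intro CollectI exI[of _ "\<lambda>_. v"]) auto

lemma closed_walk_contains_cycle:
  "walk n A f m \<Longrightarrow> 0 < m \<Longrightarrow> f 0 = f m \<Longrightarrow>
   \<exists>vs. vs \<noteq> [] \<and> distinct vs \<and> set vs \<subseteq> f ` {..m} \<and>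
     (\<forall>k<length vs. (vs ! k, vs ! ((k + 1) mod length vs)) \<in> prec_edges n A)"
proof (induction m arbitrary: f rule: less_induct)
  case (less m)
  show ?case
  proof (cases "inj_on f {..<m}")
    case True
    let ?vs = "map f [0..<m]"
    have "(?vs ! k, ?vs ! ((k + 1) mod length ?vs)) \<in> prec_edges n A" if k: "k < length ?vs" for k
    proof -
      have "f k < n" "f (Suc k) < n" "A (f k) (f (Suc k))" using less.prems(1) k unfolding walk_def by auto
      moreover have "Suc k = m \<or> Suc k < m" using k by auto
      ultimately show ?thesis using k less.prems(3) by (auto simp: prec_edges_def)
    qed
    moreover have "distinct ?vs" using True by (simp add: distinct_map atLeast0LessThan)
    ultimately show ?thesis using less.prems(2) by (intro exI[of _ ?vs]) auto
  next
    case False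
    then obtain s t where st: "s < t" "t < m" "f s = f t"
      unfolding inj_on_def by (metis lessThan_iff linorder_neqE_nat)
    have "walk n A (\<lambda>k. f (s + k)) (t - s)" using walk_shift[OF less.prems(1), of s t] st by simp
    moreover have "t - s < m" "0 < t - s" "f (s + 0) = f (s + (t - s))" using st by auto
    ultimately obtain vs where vs: "vs \<noteq> []" "distinct vs"
      "set vs \<subseteq> (\<lambda>k. f (s + k)) ` {..t - s}"
      "\<forall>k<length vs. (vs ! k, vs ! ((k + 1) mod length vs)) \<in> prec_edges n A"
      using less.IH by blast
    moreover have "(\<lambda>k. f (s + k)) ` {..t - s} \<subseteq> f ` {..m}" using st by auto
    ultimately show ?thesis by blast
  qed
qed

lemma closed_walk_in_scc:
  assumes "walk n A f m" "f 0 = v" "f m = v" "k \<le> m"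
  shows "f k \<in> scc_of n A v"
  using walk_rtrancl[OF assms(1), of 0 k] walk_rtrancl[OF assms(1), of k m] assms(2-4)
  by (simp add: scc_of_def)

lemma scc_of_in_sccs: "v < n \<Longrightarrow> scc_of n A v \<in> sccs n A"
  unfolding scc_of_def sccs_def by blast

lemma cycle_lengths_nonempty:
  assumes "on_cycle n A v"
  shows "cycle_lengths n A (scc_of n A v) \<noteq> {}"
proof -
  obtain m f where f: "0 < m" "walk n A f m" "f 0 = v" "f m = v"
    using assms unfolding on_cycle_def closed_walk_lengths_def by auto
  then obtain vs where "vs \<noteq> []" "distinct vs" "set vs \<subseteq> f ` {..m}"
     "\<forall>k<length vs. (vs ! k, vs ! ((k + 1) mod length vs)) \<in> prec_edges n A"
    using closed_walk_contains_cycle by metis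
  moreover have "f ` {..m} \<subseteq> scc_of n A v" using closed_walk_in_scc[OF f(2-4)] by auto
  ultimately show ?thesis unfolding cycle_lengths_def by blast
qed

lemma cycle_walk:
  assumes "vs \<noteq> []" "\<forall>k<length vs. (vs ! k, vs ! ((k + 1) mod length vs)) \<in> prec_edges n A"
  shows "walk n A (\<lambda>k. vs ! (k mod length vs)) (length vs)"
  unfolding walk_def
proof (intro conjI allI impI)
  fix k
  have "k mod length vs < length vs" using assms(1) by simp
  then show "vs ! (k mod length vs) < n" using assms(2) by (auto simp: prec_edges_def)
  show "A (vs ! (k mod length vs)) (vs ! (Suc k mod length vs))" if "k < length vs"
    using assms(2) \<open>k mod length vs < length vs\<close> by (auto simp: prec_edges_def mod_Suc_eq)
qed

lemma cycle_detour:
  assumes "on_cycle n A v" "L \<in> cycle_lengths n A (scc_of n A v)"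
  shows "\<exists>p q. p + q \<in> closed_walk_lengths n A v \<and> p + L + q \<in> closed_walk_lengths n A v \<and>
    p + L + q \<le> 5 * n \<and> 0 < L"
proof -
  obtain vs where vs: "L = length vs" "vs \<noteq> []" "distinct vs" "set vs \<subseteq> scc_of n A v"
     "\<forall>k<length vs. (vs ! k, vs ! ((k + 1) mod length vs)) \<in> prec_edges n A"
    using assms(2) unfolding cycle_lengths_def by blast
  have "v < n" using assms(1) by (simp add: on_cycle_def)
  define x where "x = vs ! 0"
  have "x \<in> scc_of n A v" using vs(2,4) by (auto simp: x_def)
  have "x < n" using vs(5) vs(2) by (auto simp: x_def prec_edges_def)
  obtain p f1 where f1: "walk n A f1 p" "f1 0 = v" "f1 p = x" "p \<le> 2 * n"
    using reachable_short_walk[of v x n A] \<open>x \<in> scc_of n A v\<close> \<open>v < n\<close> by (auto simp: scc_of_def)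
  obtain q f2 where f2: "walk n A f2 q" "f2 0 = x" "f2 q = v" "q \<le> 2 * n"
    using reachable_short_walk[of x v n A] \<open>x \<in> scc_of n A v\<close> \<open>x < n\<close> by (auto simp: scc_of_def)
  have cyc: "walk n A (\<lambda>k. vs ! (k mod length vs)) L" using cycle_walk[OF vs(2,5)] vs(1) by simp
  have "L \<le> n"
  proof -
    have "set vs \<subseteq> {..<n}" using vs(5) by (auto simp: in_set_conv_nth prec_edges_def)
    then show ?thesis using card_mono[of "{..<n}" "set vs"] distinct_card[OF vs(3)] vs(1) by simp
  qed
  obtain h1 where "walk n A h1 (p + q)" "h1 0 = v" "h1 (p + q) = v"
    using walk_join[OF f1(1) f2(1)] f1 f2 by auto
  moreover obtain h2 where "walk n A h2 (p + L)" "h2 0 = v" "h2 (p + L) = x"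
    using walk_join[OF f1(1) cyc] f1 vs(1) by (auto simp: x_def)
  then obtain h3 where "walk n A h3 (p + L + q)" "h3 0 = v" "h3 (p + L + q) = v"
    using walk_join[OF _ f2(1)] f2 by metis
  ultimately have "p + q \<in> closed_walk_lengths n A v" "p + L + q \<in> closed_walk_lengths n A v"
    unfolding closed_walk_lengths_def by blast+
  moreover have "p + L + q \<le> 5 * n" "0 < L" using f1(4) f2(4) \<open>L \<le> n\<close> vs(1,2) by auto
  ultimately show ?thesis by blast
qed

lemma short_closed_walk:
  assumes "on_cycle n A v"
  shows "\<exists>m \<in> closed_walk_lengths n A v. 0 < m \<and> m \<le> 5 * n"
proof -
  obtain L where "L \<in> cycle_lengths n A (scc_of n A v)" using cycle_lengths_nonempty[OF assms] by blast
  from cycle_detour[OF assms this] obtain p q where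
    "p + L + q \<in> closed_walk_lengths n A v" "p + L + q \<le> 5 * n" "0 < L" by blast
  then show ?thesis by (intro bexI[of _ "p + L + q"]) auto
qed

lemma local_period_bounds:
  assumes "on_cycle n A v"
  shows "0 < local_period n A v" "local_period n A v \<le> 5 * n"
proof -
  obtain m where m: "m \<in> closed_walk_lengths n A v" "0 < m" "m \<le> 5 * n"
    using short_closed_walk[OF assms] by blast
  then have "local_period n A v dvd m" unfolding local_period_def by (intro Gcd_dvd) simp
  then show "0 < local_period n A v" "local_period n A v \<le> 5 * n"
    using m by (auto intro: gr0I dest: dvd_imp_le)
qed

lemma local_period_dvd_cyclicity:
  assumes "on_cycle n A v"
  shows "local_period n A v dvd cyclicity n A"
proof -
  have "local_period n A v dvd L" if L: "L \<in> cycle_lengths n A (scc_of n A v)" for L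
  proof -
    from cycle_detour[OF assms L] obtain p q where
      pq: "p + q \<in> closed_walk_lengths n A v" "p + L + q \<in> closed_walk_lengths n A v" "p + L + q \<le> 5 * n" "0 < L"
      by blast
    have "local_period n A v dvd p + L + q" using pq by (auto simp: local_period_def intro: Gcd_dvd)
    moreover have "local_period n A v dvd p + q"
      using pq by (cases "p + q = 0") (auto simp: local_period_def intro: Gcd_dvd)
    ultimately show ?thesis by (metis add.commute add.left_commute dvd_add_right_iff)
  qed
  then have "local_period n A v dvd Gcd (cycle_lengths n A (scc_of n A v))" by (simp add: Gcd_greatest)
  also have "\<dots> dvd cyclicity n A"
    unfolding cyclicity_def using cycle_lengths_nonempty[OF assms] scc_of_in_sccs assms
    by (intro dvd_Lcm) (auto simp: on_cycle_def)
  finally show ?thesis .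
qed

lemma cyclicity_pos: "0 < cyclicity n A"
proof -
  let ?X = "{Gcd (cycle_lengths n A C) | C. C \<in> sccs n A \<and> cycle_lengths n A C \<noteq> {}}"
  have "finite ?X" by (simp add: sccs_def)
  moreover have "0 \<notin> ?X" by (auto simp: cycle_lengths_def)
  ultimately have "Lcm ?X \<noteq> 0" using Lcm_0_iff_nat by blast
  then show ?thesis unfolding cyclicity_def by simp
qed

lemma closed_walk_lengths_large_multiples:
  assumes "on_cycle n A v" "local_period n A v dvd m" "(5 * n) * (5 * n) \<le> m"
  shows "m \<in> closed_walk_lengths n A v"
proof -
  let ?G = "{m \<in> closed_walk_lengths n A v. 0 < m \<and> m \<le> 5 * n}"
  have "5 * n * (5 * n div Gcd ?G) \<le> m" using assms(3) by (meson div_le_dividend le_trans mult_le_mono2)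
  then show ?thesis
  proof (rule add_closed_contains_multiples[where G = ?G and N = "5 * n", rotated -1])
    show "0 \<in> closed_walk_lengths n A v"
      using assms(1) zero_in_closed_walk_lengths by (simp add: on_cycle_def)
    show "finite ?G" by (rule finite_subset[of _ "{..5 * n}"]) auto
    show "Gcd ?G dvd m" using assms(2) by (simp add: local_period_def)
  qed (auto intro: closed_walk_lengths_add)
qed

section \<open>Eventual periodicity of the powers\<close>

lemma walk_through_cycle:
  assumes f: "walk n A f k" and "n \<le> k"
  shows "\<exists>v g m p. on_cycle n A v \<and> walk n A g m \<and> g 0 = f 0 \<and> g m = f k \<and> p \<le> m \<and> g p = v \<and>
    m \<le> 10 * n * n \<and> [m = k] (mod local_period n A v)"
proof -
  have "\<forall>x\<in>{0..k}. f x < n" using f unfolding walk_def by auto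
  then obtain s t where st: "s \<le> k" "t \<le> k" "s < t" "f s = f t"
    using pigeonhole_pair[of "{0..k}" n 1 f] \<open>n \<le> k\<close> by force
  have "walk n A (\<lambda>x. f (s + x)) (t - s)" using walk_shift[OF f, of s t] st by simp
  then have "t - s \<in> closed_walk_lengths n A (f s)" using st unfolding closed_walk_lengths_def by auto
  moreover have "0 < t - s" "f s < n" using st \<open>\<forall>x\<in>{0..k}. f x < n\<close> by auto
  ultimately have cyc: "on_cycle n A (f s)" unfolding on_cycle_def by blast
  note D = local_period_bounds[OF cyc]
  obtain g m p where g: "walk n A g m" "g 0 = f 0" "g m = f k" "p \<le> m" "g p = f s"
    "[m = k] (mod local_period n A (f s))" "m \<le> 2 * n * local_period n A (f s)"
    using walk_shorten[OF D(1) f st(1)] by auto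
  have "2 * n * local_period n A (f s) \<le> 2 * n * (5 * n)" using D(2) by (rule mult_le_mono2)
  then have "m \<le> 10 * n * n" using g(7) by (simp only: mult.assoc)
  with cyc g show ?thesis by blast
qed

lemma walk_pump:
  assumes cyc: "on_cycle n A v" and g: "walk n A g m" "p \<le> m" "g p = v" "m \<le> 10 * n * n"
    and k: "[m = k] (mod local_period n A v)" "35 * n * n \<le> k"
  shows "\<exists>f. walk n A f k \<and> f 0 = g 0 \<and> f k = g m"
proof -
  have "m \<le> k" using g(4) k(2) by linarith
  then have "local_period n A v dvd k - m" using k(1) by (simp add: cong_altdef_nat cong_sym_eq)
  moreover have "(5 * n) * (5 * n) \<le> k - m" using g(4) k(2) by linarith
  ultimately have "k - m \<in> closed_walk_lengths n A v" by (rule closed_walk_lengths_large_multiples[OF cyc])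
  then obtain h where h: "walk n A h (k - m)" "h 0 = v" "h (k - m) = v" unfolding closed_walk_lengths_def by blast
  obtain h1 where h1: "walk n A h1 (p + (k - m))" "h1 0 = g 0" "h1 (p + (k - m)) = v"
    using walk_join[OF walk_prefix[OF g(1,2)] h(1)] g(3) h(2,3) by auto
  obtain h2 where "walk n A h2 (p + (k - m) + (m - p))" "h2 0 = g 0" "h2 (p + (k - m) + (m - p)) = g m"
    using walk_join[OF h1(1) walk_shift[OF g(1) g(2) order_refl]] h1 g(2,3) by auto
  moreover have "p + (k - m) + (m - p) = k" using g(2) \<open>m \<le> k\<close> by simp
  ultimately show ?thesis by metis
qed

lemma walk_change_length:
  assumes f: "walk n A f k" and "35 * n * n \<le> k" "35 * n * n \<le> k'" "[k = k'] (mod cyclicity n A)"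
  shows "\<exists>f'. walk n A f' k' \<and> f' 0 = f 0 \<and> f' k' = f k"
proof -
  have "n \<le> k" using assms(2) by (cases n) auto
  then obtain v g m p where g: "on_cycle n A v" "walk n A g m" "g 0 = f 0" "g m = f k" "p \<le> m" "g p = v"
    "m \<le> 10 * n * n" "[m = k] (mod local_period n A v)"
    using walk_through_cycle[OF f] by blast
  have "[k = k'] (mod local_period n A v)"
    using assms(4) local_period_dvd_cyclicity[OF g(1)] by (rule cong_dvd_modulus_nat)
  then have "[m = k'] (mod local_period n A v)" using g(8) by (rule cong_trans[rotated])
  then show ?thesis using walk_pump[OF g(1,2,5,6,7) _ assms(3)] g(3,4) by auto
qed

lemma bpow_periodic:
  assumes A: "\<And>i j. A i j \<Longrightarrow> i < n \<and> j < n" and k: "35 * n * n \<le> k"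
  shows "bpow n A (k + cyclicity n A) = bpow n A k"
proof (intro ext)
  fix i j
  define k' where "k' = k + cyclicity n A"
  have k': "35 * n * n \<le> k'" "[k' = k] (mod cyclicity n A)" using k by (simp_all add: k'_def cong_def)
  have "(\<exists>f. walk n A f k' \<and> f 0 = i \<and> f k' = j) \<longleftrightarrow> (\<exists>f. walk n A f k \<and> f 0 = i \<and> f k = j)"
  proof
    assume "\<exists>f. walk n A f k' \<and> f 0 = i \<and> f k' = j"
    then obtain f where "walk n A f k'" "f 0 = i" "f k' = j" by blast
    then show "\<exists>f. walk n A f k \<and> f 0 = i \<and> f k = j" using walk_change_length k k' by metis
  next
    assume "\<exists>f. walk n A f k \<and> f 0 = i \<and> f k = j"
    then obtain f where "walk n A f k" "f 0 = i" "f k = j" by blast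
    then show "\<exists>f. walk n A f k' \<and> f 0 = i \<and> f k' = j" using walk_change_length k k' cong_sym by metis
  qed
  then show "bpow n A (k + cyclicity n A) i j = bpow n A k i j"
    by (simp only: bpow_iff_walk[OF A] k'_def)
qed

lemma bmonoid_singleton: "bmonoid n {A} = range (bpow n A)"
proof (intro equalityI subsetI)
  fix X assume "X \<in> bmonoid n {A}"
  then show "X \<in> range (bpow n A)"
  proof (induction rule: bmonoid.induct)
    case unit
    show ?case by (rule range_eqI[of _ _ 0]) (simp add: bpow_def)
  next
    case (step X g)
    then obtain m where "X = bpow n A m" by auto
    then have "bmult n X g = bpow n A (Suc m)" using step by (simp add: bpow_def)
    then show ?case by simp
  qed
next
  fix X assume "X \<in> range (bpow n A)"
  then obtain m where "X = bpow n A m" by auto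
  moreover have "bpow n A m \<in> bmonoid n {A}"
    by (induction m) (simp_all add: bpow_def bmonoid.unit bmonoid.step)
  ultimately show "X \<in> bmonoid n {A}" by simp
qed

lemma card_bmonoid_singleton_le:
  assumes A: "\<And>i j. A i j \<Longrightarrow> i < n \<and> j < n"
  shows "card (bmonoid n {A}) \<le> 35 * n * n + cyclicity n A"
proof -
  define N where "N = 35 * n * n + cyclicity n A"
  have "bpow n A m \<in> bpow n A ` {..<N}" for m
  proof (induction m rule: less_induct)
    case (less m)
    show ?case
    proof (cases "m < N")
      case False
      then have "35 * n * n \<le> m - cyclicity n A" "m - cyclicity n A < m"
        using cyclicity_pos[of n A] by (auto simp: N_def)
      moreover have "m - cyclicity n A + cyclicity n A = m" using False by (simp add: N_def)
      ultimately show ?thesis using bpow_periodic[OF A] less.IH by metis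
    qed simp
  qed
  then have "bmonoid n {A} \<subseteq> bpow n A ` {..<N}" unfolding bmonoid_singleton by blast
  then have "card (bmonoid n {A}) \<le> card (bpow n A ` {..<N})" by (rule card_mono[rotated]) simp
  also have "\<dots> \<le> N" using card_image_le[of "{..<N}" "bpow n A"] by simp
  finally show ?thesis unfolding N_def .
qed

section \<open>Subspaces of \<open>GF(2)^J\<close>\<close>

text \<open>Over \<open>GF(2)\<close>
  closure under addition is all a subspace needs, and a subspace has dimension \<open>k\<close> iff it has
  \<open>2^k\<close> elements.\<close>

definition vecs_on :: "nat set \<Rightarrow> (nat \<Rightarrow> bit) set" where
  "vecs_on J = {x. \<forall>l. l \<notin> J \<longrightarrow> x l = 0}"

definition f2_subspace :: "nat set \<Rightarrow> (nat \<Rightarrow> bit) set \<Rightarrow> bool" where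
  "f2_subspace J W \<longleftrightarrow> 0 \<in> W \<and> (\<forall>x\<in>W. \<forall>y\<in>W. x + y \<in> W) \<and> W \<subseteq> vecs_on J"

definition f2_subspaces :: "nat set \<Rightarrow> nat \<Rightarrow> (nat \<Rightarrow> bit) set set" where
  "f2_subspaces J k = {W. f2_subspace J W \<and> card W = 2 ^ k}"

lemma bit_vec_add_self [simp]: "(x :: nat \<Rightarrow> bit) + (x + y) = y"
  by (simp add: fun_eq_iff)

lemma finite_vecs_on:
  assumes "finite J"
  shows "finite (vecs_on J)" and "card (vecs_on J) \<le> 2 ^ card J"
proof -
  have "vecs_on J \<subseteq> (\<lambda>S l. of_bool (l \<in> S)) ` Pow J"
  proof
    fix x assume x: "x \<in> vecs_on J"
    then have "x = (\<lambda>l. of_bool (l \<in> {l \<in> J. x l = 1}))"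
      by (auto simp: vecs_on_def fun_eq_iff)
    then show "x \<in> (\<lambda>S l. of_bool (l \<in> S)) ` Pow J" by blast
  qed
  from finite_surj[OF _ this] surj_card_le[OF _ this] show "finite (vecs_on J)" "card (vecs_on J) \<le> 2 ^ card J"
    using assms by (simp_all add: card_Pow)
qed

lemma finite_f2_subspace: "finite J \<Longrightarrow> f2_subspace J W \<Longrightarrow> finite W"
  unfolding f2_subspace_def using finite_vecs_on(1) finite_subset by blast

lemma f2_subspace_zero_slice:
  "f2_subspace (insert p J) W \<Longrightarrow> f2_subspace J {x \<in> W. x p = 0}"
  unfolding f2_subspace_def vecs_on_def by auto

lemma f2_subspace_one_slice:
  assumes "f2_subspace J W" "w \<in> W" "w p = 1"
  shows "{x \<in> W. x p = 1} = (+) w ` {x \<in> W. x p = 0}"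
proof (intro equalityI subsetI)
  fix x assume "x \<in> {x \<in> W. x p = 1}"
  then have "w + x \<in> {x \<in> W. x p = 0}" "x = w + (w + x)" using assms by (auto simp: f2_subspace_def)
  then show "x \<in> (+) w ` {x \<in> W. x p = 0}" by blast
qed (use assms in \<open>auto simp: f2_subspace_def\<close>)

lemma f2_subspace_decompose:
  assumes "f2_subspace J W" "w \<in> W" "w p = 1"
  shows "W = {x \<in> W. x p = 0} \<union> (+) w ` {x \<in> W. x p = 0}"
proof -
  have "W = {x \<in> W. x p = 0} \<union> {x \<in> W. x p = 1}" by auto
  then show ?thesis unfolding f2_subspace_one_slice[OF assms] .
qed

lemma card_f2_subspace_split:
  assumes "finite J" "f2_subspace J W" "w \<in> W" "w p = 1"
  shows "card W = 2 * card {x \<in> W. x p = 0}"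
proof -
  have fin: "finite W" using finite_f2_subspace assms(1,2) .
  have "card W = card ({x \<in> W. x p = 0} \<union> {x \<in> W. x p = 1})"
    by (rule arg_cong[where f = card]) auto
  also have "\<dots> = card {x \<in> W. x p = 0} + card {x \<in> W. x p = 1}"
    by (rule card_Un_disjoint) (use fin in auto)
  also have "card {x \<in> W. x p = 1} = card {x \<in> W. x p = 0}"
    unfolding f2_subspace_one_slice[OF assms(2-4)] by (simp add: card_image)
  finally show ?thesis by simp
qed

lemma card_f2_subspace_le:
  assumes "finite J" "f2_subspace J W"
  shows "card W \<le> 2 ^ card J"
proof -
  have "card W \<le> card (vecs_on J)"
    using assms finite_vecs_on(1) by (intro card_mono) (auto simp: f2_subspace_def)
  then show ?thesis using finite_vecs_on(2)[OF assms(1)] by linarith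
qed

lemma card_f2_subspace:
  assumes "finite J" "f2_subspace J W"
  shows "\<exists>k \<le> card J. card W = 2 ^ k"
proof -
  have "\<exists>k. card W = 2 ^ k" using assms
  proof (induction J arbitrary: W rule: finite_induct)
    case empty
    then have "W = {0}" by (auto simp: f2_subspace_def vecs_on_def fun_eq_iff)
    then show ?case by (intro exI[of _ 0]) simp
  next
    case (insert p J)
    obtain k where k: "card {x \<in> W. x p = 0} = 2 ^ k"
      using insert.IH[OF f2_subspace_zero_slice[OF insert.prems]] by blast
    show ?case
    proof (cases "\<exists>w \<in> W. w p = 1")
      case True
      then obtain w where "w \<in> W" "w p = 1" by blast
      then have "card W = 2 ^ Suc k"
        using card_f2_subspace_split[OF _ insert.prems] insert.hyps(1) k by simp
      then show ?thesis by blast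
    next
      case False
      then have "W = {x \<in> W. x p = 0}" by auto
      then show ?thesis using k by metis
    qed
  qed
  then obtain k where "card W = 2 ^ k" by blast
  moreover have "k \<le> card J"
    using card_f2_subspace_le[OF assms] \<open>card W = 2 ^ k\<close> by simp
  ultimately show ?thesis by blast
qed

lemma f2_subspaces_empty: "finite J \<Longrightarrow> card J < k \<Longrightarrow> f2_subspaces J k = {}"
  using card_f2_subspace_le by (fastforce simp: f2_subspaces_def)

lemma finite_f2_subspaces: "finite J \<Longrightarrow> finite (f2_subspaces J k)"
  by (rule finite_subset[of _ "Pow (vecs_on J)"])
    (auto simp: f2_subspaces_def f2_subspace_def finite_vecs_on(1))

lemma f2_subspace_pair_inj:
  "inj_on (\<lambda>(W, w). ({x \<in> W. x p = 0}, w(p := 0))) {(W, w). f2_subspace J W \<and> w \<in> W \<and> w p = 1}"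
proof (rule inj_onI, clarsimp)
  fix W w V v
  assume W: "f2_subspace J W" "w \<in> W" "w p = 1" and V: "f2_subspace J V" "v \<in> V" "v p = 1"
    and eq: "{x \<in> W. x p = 0} = {x \<in> V. x p = 0}" "w(p := 0) = v(p := 0)"
  have "w = v" using eq(2) W(3) V(3) by (metis fun_upd_triv fun_upd_upd)
  moreover have "W = V"
    using f2_subspace_decompose[OF W] f2_subspace_decompose[OF V] eq(1) \<open>w = v\<close> by simp
  ultimately show "W = V \<and> w = v" by blast
qed

lemma card_f2_subspaces_off_hyperplane:
  fixes k :: nat
  assumes J: "finite J" and p: "p \<notin> J"
  defines "B \<equiv> {W \<in> f2_subspaces (insert p J) (Suc k). \<exists>w\<in>W. w p = 1}"
  shows "card B * 2 ^ k \<le> card (f2_subspaces J k) * 2 ^ card J"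
proof -
  let ?slice0 = "\<lambda>W. {x \<in> W. x p = 0}" and ?slice1 = "\<lambda>W. {x \<in> W. x p = 1}"
  have finJ': "finite (insert p J)" using J by simp
  have slices: "card (?slice1 W) = 2 ^ k" "?slice0 W \<in> f2_subspaces J k" if WB: "W \<in> B" for W
  proof -
    obtain w where w: "w \<in> W" "w p = 1" and W: "f2_subspace (insert p J) W" "card W = 2 ^ Suc k"
      using WB by (auto simp: B_def f2_subspaces_def)
    have "card (?slice1 W) = card (?slice0 W)"
      unfolding f2_subspace_one_slice[OF W(1) w] by (simp add: card_image)
    moreover have "card W = 2 * card (?slice0 W)" using card_f2_subspace_split[OF finJ' W(1) w] .
    ultimately show "card (?slice1 W) = 2 ^ k" "?slice0 W \<in> f2_subspaces J k"
      using W f2_subspace_zero_slice by (auto simp: f2_subspaces_def)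
  qed
  \<comment> \<open>Double counting of the pairs \<open>(W, w)\<close> with \<open>w \<in> W\<close> and \<open>w p = 1\<close>.\<close>
  define P where "P = Sigma B ?slice1"
  define \<phi> where "\<phi> = (\<lambda>(W :: (nat \<Rightarrow> bit) set, w :: nat \<Rightarrow> bit). (?slice0 W, w(p := 0)))"
  have "finite B" using finite_f2_subspaces[OF finJ'] by (auto simp: B_def)
  have "card B * 2 ^ k = (\<Sum>W\<in>B. card (?slice1 W))" using slices(1) by simp
  also have "\<dots> = card P"
    unfolding P_def using \<open>finite B\<close> slices(1) by (intro card_SigmaI[symmetric]) (auto intro: card_ge_0_finite)
  also have "\<dots> = card (\<phi> ` P)"
    unfolding \<phi>_def by (rule card_image[symmetric], rule inj_on_subset[OF f2_subspace_pair_inj])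
      (auto simp: P_def B_def f2_subspaces_def)
  also have "\<dots> \<le> card (f2_subspaces J k \<times> vecs_on J)"
  proof (rule card_mono)
    show "finite (f2_subspaces J k \<times> vecs_on J)" using finite_f2_subspaces[OF J] finite_vecs_on(1)[OF J] by simp
    show "\<phi> ` P \<subseteq> f2_subspaces J k \<times> vecs_on J"
    proof
      fix Z assume "Z \<in> \<phi> ` P"
      then obtain W w where Z: "Z = \<phi> (W, w)" and "W \<in> B" "w \<in> ?slice1 W" by (auto simp: P_def)
      then have "w \<in> vecs_on (insert p J)" by (auto simp: B_def f2_subspaces_def f2_subspace_def)
      then have "w(p := 0) \<in> vecs_on J" by (simp add: vecs_on_def)
      then show "Z \<in> f2_subspaces J k \<times> vecs_on J" using slices(2)[OF \<open>W \<in> B\<close>] by (simp add: Z \<phi>_def)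
    qed
  qed
  also have "\<dots> \<le> card (f2_subspaces J k) * 2 ^ card J"
    using finite_vecs_on(2)[OF J] by (simp add: card_cartesian_product)
  finally show ?thesis .
qed

lemma card_f2_subspaces_insert:
  assumes J: "finite J" and p: "p \<notin> J"
  shows "card (f2_subspaces (insert p J) (Suc k))
           \<le> card (f2_subspaces J (Suc k)) + card (f2_subspaces J k) * 2 ^ (card J - k)"
proof -
  let ?S = "f2_subspaces (insert p J) (Suc k)"
  define A where "A = {W \<in> ?S. \<forall>x\<in>W. x p = 0}"
  define B where "B = {W \<in> ?S. \<exists>w\<in>W. w p = 1}"
  have "A \<subseteq> f2_subspaces J (Suc k)"
  proof
    fix W assume "W \<in> A"
    then have "W = {x \<in> W. x p = 0}" "W \<in> ?S" by (auto simp: A_def)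
    then show "W \<in> f2_subspaces J (Suc k)"
      using f2_subspace_zero_slice by (metis (no_types, lifting) f2_subspaces_def mem_Collect_eq)
  qed
  then have "card A \<le> card (f2_subspaces J (Suc k))" using finite_f2_subspaces[OF J] by (rule card_mono[rotated])
  moreover have "card B \<le> card (f2_subspaces J k) * 2 ^ (card J - k)"
  proof (cases "k \<le> card J")
    case True
    have "card B * 2 ^ k \<le> card (f2_subspaces J k) * 2 ^ card J"
      unfolding B_def by (rule card_f2_subspaces_off_hyperplane[OF J p])
    also have "\<dots> = card (f2_subspaces J k) * 2 ^ (card J - k) * 2 ^ k"
      using True by (metis le_add_diff_inverse2 mult.assoc power_add)
    finally show ?thesis by simp
  next
    case False
    then show ?thesis
      using card_f2_subspaces_off_hyperplane[OF J p, of k] f2_subspaces_empty[OF J] by (simp add: B_def)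
  qed
  moreover have "?S = A \<union> B" by (auto simp: A_def B_def)
  then have "card ?S \<le> card A + card B" by (metis card_Un_le)
  ultimately show ?thesis by linarith
qed

lemma card_f2_subspaces_0: "card (f2_subspaces J 0) \<le> 1"
proof -
  have "f2_subspaces J 0 \<subseteq> {{0}}" by (auto simp: f2_subspaces_def f2_subspace_def card_1_singleton_iff)
  then show ?thesis using card_mono[of "{{0}}"] by simp
qed

lemma card_f2_subspaces_le:
  assumes "finite J"
  shows "card (f2_subspaces J k) \<le> 2 ^ (k * (card J - k) + card J)"
  using assms
proof (induction J arbitrary: k rule: finite_induct)
  case empty
  show ?case
  proof (cases k)
    case 0
    then show ?thesis using card_f2_subspaces_0 by simp
  qed (simp add: f2_subspaces_empty)
next
  case (insert p J)
  show ?case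
  proof (cases k)
    case 0
    have "card (f2_subspaces (insert p J) k) \<le> 1" using 0 card_f2_subspaces_0 by simp
    also have "1 \<le> (2::nat) ^ (k * (card (insert p J) - k) + card (insert p J))" by simp
    finally show ?thesis .
  next
    case (Suc k')
    define r where "r = card J"
    define E where "E = Suc k' * (r - k') + r"
    have "Suc k' * (r - Suc k') \<le> Suc k' * (r - k')" by (rule mult_le_mono2) simp
    then have "card (f2_subspaces J (Suc k')) \<le> 2 ^ E"
      using insert.IH[of "Suc k'"] by (rule_tac order_trans) (auto simp: E_def r_def)
    moreover have "card (f2_subspaces J k') * 2 ^ (r - k') \<le> 2 ^ E"
    proof -
      have "card (f2_subspaces J k') * 2 ^ (r - k') \<le> 2 ^ (k' * (r - k') + r) * 2 ^ (r - k')"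
        using insert.IH[of k'] by (simp add: r_def)
      also have "\<dots> = 2 ^ E" by (simp add: E_def power_add[symmetric])
      finally show ?thesis .
    qed
    ultimately have "card (f2_subspaces (insert p J) (Suc k')) \<le> 2 ^ Suc E"
      using card_f2_subspaces_insert[OF insert.hyps, of k'] by (simp add: r_def)
    then show ?thesis using insert.hyps by (simp add: Suc E_def r_def)
  qed
qed

section \<open>The Boolean range and the rank over \<open>GF(2)\<close>\<close>

lemma (in vec_space) rank_spanning_cols:
  assumes A: "A \<in> carrier_mat n nc"
  obtains S where "S \<subseteq> set (cols A)" "finite S" "card S = rank A" "set (cols A) \<subseteq> span S"
proof -
  have cols: "set (cols A) \<subseteq> carrier_vec n" using cols_dim[of A] carrier_matD(1)[OF A] by simp
  obtain S where S: "maximal S (\<lambda>T. T \<subseteq> set (cols A) \<and> lin_indpt T)"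
    using maximal_exists[of "\<lambda>T. T \<subseteq> set (cols A) \<and> lin_indpt T" "card (set (cols A))" "{}"]
    by (meson List.finite_set card_mono empty_iff empty_subsetI finite_lin_indpt2 rev_finite_subset)
  then have S_cols: "S \<subseteq> set (cols A)" and indep: "lin_indpt S" by (auto simp: maximal_def)
  have S_carrier: "S \<subseteq> carrier_vec n" using S_cols cols by blast
  have "set (cols A) \<subseteq> span S"
  proof
    fix c assume c: "c \<in> set (cols A)"
    show "c \<in> span S"
    proof (rule ccontr)
      assume "c \<notin> span S"
      then have "c \<notin> S" "lin_indpt (S \<union> {c})"
        using in_own_span[OF S_carrier] lin_dep_iff_in_span[OF S_carrier indep] cols c by auto
      then show False using S c S_cols unfolding maximal_def by blast
    qed
  qed
  then show thesis using that S_cols rank_card_indpt[OF A S] finite_subset[OF S_cols] by auto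
qed

lemma rank_F2_column_basis:
  "\<exists>J \<subseteq> {..<n}. card J = rank_F2 n T \<and>
     (\<forall>j<n. \<exists>\<mu>. \<forall>i<n. (of_bool (T i j) :: bit) = (\<Sum>l\<in>J. \<mu> l * of_bool (T i l)))"
proof -
  interpret vs: vec_space "TYPE(bit)" n .
  define M where "M = to_F2_mat n T"
  have M: "M \<in> carrier_mat n n" by (simp add: M_def to_F2_mat_def)
  have M_entry: "col M j $ i = of_bool (T i j)" if "i < n" "j < n" for i j
    using that by (simp add: M_def to_F2_mat_def)
  obtain S where S: "S \<subseteq> set (cols M)" "finite S" "card S = rank_F2 n T" "set (cols M) \<subseteq> vs.span S"
    using vs.rank_spanning_cols[OF M] unfolding rank_F2_def M_def by blast
  have cols: "set (cols M) = col M ` {..<n}" using M by (auto simp: cols_def atLeast0LessThan)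
  then obtain J where J: "J \<subseteq> {..<n}" "inj_on (col M) J" "S = col M ` J"
    using S(1) by (auto simp: subset_image_inj)
  have S_carrier: "S \<subseteq> carrier_vec n" using S(1) cols_dim[of M] unfolding carrier_matD(1)[OF M] by blast
  have "card J = rank_F2 n T" using S(3) unfolding J(3) card_image[OF J(2)] .
  moreover have "\<exists>\<mu>. \<forall>i<n. (of_bool (T i j) :: bit) = (\<Sum>l\<in>J. \<mu> l * of_bool (T i l))"
    if j: "j < n" for j
  proof -
    have "col M j \<in> vs.span S" using S(4) cols j by blast
    then obtain a where a: "vs.lincomb a S = col M j"
      using vs.finite_in_span[OF S(2) S_carrier] by blast
    have "of_bool (T i j) = (\<Sum>l\<in>J. a (col M l) * of_bool (T i l))" if i: "i < n" for i
    proof -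
      have "of_bool (T i j) = (\<Sum>x\<in>S. a x * x $ i)"
        unfolding M_entry[OF i j, symmetric] a[symmetric] by (rule vs.lincomb_index[OF i S_carrier])
      also have "\<dots> = (\<Sum>l\<in>J. a (col M l) * col M l $ i)"
        unfolding J(3) by (rule sum.reindex[OF J(2), unfolded comp_def])
      also have "\<dots> = (\<Sum>l\<in>J. a (col M l) * of_bool (T i l))"
        by (rule sum.cong[OF refl]) (use J(1) M_entry i in auto)
      finally show ?thesis .
    qed
    then show ?thesis by (intro exI[of _ "\<lambda>l. a (col M l)"]) blast
  qed
  ultimately show ?thesis using J(1) by blast
qed

definition row_span :: "(nat \<Rightarrow> nat \<Rightarrow> bit) \<Rightarrow> nat set \<Rightarrow> (nat \<Rightarrow> bit) set" where
  "row_span R Z = {(\<lambda>l. \<Sum>k\<in>X. R k l) | X. X \<subseteq> Z}"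

lemma sum_bit_symdiff:
  fixes g :: "nat \<Rightarrow> bit"
  assumes "finite X" "finite Y"
  shows "(\<Sum>k\<in>X. g k) + (\<Sum>k\<in>Y. g k) = (\<Sum>k\<in>(X - Y) \<union> (Y - X). g k)"
proof -
  define a where "a = (\<Sum>k\<in>X - Y. g k)"
  define b where "b = (\<Sum>k\<in>Y - X. g k)"
  define c where "c = (\<Sum>k\<in>X \<inter> Y. g k)"
  have "(\<Sum>k\<in>X. g k) = a + c" "(\<Sum>k\<in>Y. g k) = b + c"
    unfolding a_def b_def c_def using assms by (metis add.commute sum.Int_Diff, metis add.commute sum.Int_Diff Int_commute)
  moreover have "(\<Sum>k\<in>(X - Y) \<union> (Y - X). g k) = a + b"
    unfolding a_def b_def using assms by (intro sum.union_disjoint) auto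
  moreover have "(a + c) + (b + c) = a + b + (c + c)" by (simp only: ac_simps)
  ultimately show ?thesis by simp
qed

lemma f2_subspace_row_span:
  assumes "finite Z" "\<And>k. k \<in> Z \<Longrightarrow> R k \<in> vecs_on J"
  shows "f2_subspace J (row_span R Z)"
  unfolding f2_subspace_def
proof (intro conjI ballI)
  show "0 \<in> row_span R Z" unfolding row_span_def by (intro CollectI exI[of _ "{}"]) (simp add: fun_eq_iff)
next
  fix x y assume "x \<in> row_span R Z" "y \<in> row_span R Z"
  then obtain X Y where X: "X \<subseteq> Z" "x = (\<lambda>l. \<Sum>k\<in>X. R k l)" and Y: "Y \<subseteq> Z" "y = (\<lambda>l. \<Sum>k\<in>Y. R k l)"
    unfolding row_span_def by blast
  moreover have "finite X" "finite Y" using X(1) Y(1) assms(1) finite_subset by auto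
  ultimately have "x + y = (\<lambda>l. \<Sum>k\<in>(X - Y) \<union> (Y - X). R k l)" "(X - Y) \<union> (Y - X) \<subseteq> Z"
    by (simp_all only: plus_fun_def sum_bit_symdiff) blast
  then show "x + y \<in> row_span R Z" unfolding row_span_def by blast
next
  show "row_span R Z \<subseteq> vecs_on J"
    using assms(2) by (force simp: row_span_def vecs_on_def intro: sum.neutral)
qed

lemma row_span_functional_zero:
  assumes "finite Z" "\<And>k. k \<in> Z \<Longrightarrow> (\<Sum>l\<in>J. \<mu> l * R k l) = 0" "x \<in> row_span R Z"
  shows "(\<Sum>l\<in>J. \<mu> l * x l) = 0"
proof -
  obtain X where X: "X \<subseteq> Z" "x = (\<lambda>l. \<Sum>k\<in>X. R k l)" using assms(3) by (auto simp: row_span_def)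
  have "(\<Sum>l\<in>J. \<mu> l * x l) = (\<Sum>l\<in>J. \<Sum>k\<in>X. \<mu> l * R k l)"
    unfolding X(2) by (simp only: sum_distrib_left)
  also have "\<dots> = (\<Sum>k\<in>X. \<Sum>l\<in>J. \<mu> l * R k l)" by (rule sum.swap)
  also have "\<dots> = 0" using X(1) assms(2) by (auto intro: sum.neutral)
  finally show ?thesis .
qed

lemma row_in_zero_row_span_iff:
  assumes col: "\<And>j. j < n \<Longrightarrow> \<exists>\<mu>. \<forall>k<n. (of_bool (T k j) :: bit) = (\<Sum>l\<in>J. \<mu> l * R k l)"
    and U: "U \<in> brange n T" and i: "i < n"
  shows "R i \<in> row_span R {k. k < n \<and> \<not> U k} \<longleftrightarrow> \<not> U i"
proof
  assume "\<not> U i"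
  have "R i = (\<lambda>l. \<Sum>k\<in>{i}. R k l)"
    by (simp only: sum.insert finite.emptyI empty_iff not_False_eq_True sum.empty add_0_right)
  then show "R i \<in> row_span R {k. k < n \<and> \<not> U k}" using i \<open>\<not> U i\<close> unfolding row_span_def by blast
next
  assume R_i: "R i \<in> row_span R {k. k < n \<and> \<not> U k}"
  obtain v where v: "U = (\<lambda>i. \<exists>j<n. T i j \<and> v j)" using U unfolding brange_def by blast
  show "\<not> U i"
  proof
    assume "U i"
    then obtain j where j: "j < n" "T i j" "v j" using v by auto
    obtain \<mu> where \<mu>: "\<And>k. k < n \<Longrightarrow> (of_bool (T k j) :: bit) = (\<Sum>l\<in>J. \<mu> l * R k l)"
      using col[OF j(1)] by blast
    \<comment> \<open>The functional giving column \<open>j\<close> vanishes at every zero position of \<open>U = T v\<close>, since \<open>v j\<close>.\<close>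
    have "(\<Sum>l\<in>J. \<mu> l * R k l) = 0" if k: "k \<in> {k. k < n \<and> \<not> U k}" for k
    proof -
      have "k < n" "\<not> T k j" using k j v by auto
      then show ?thesis using \<mu>[of k] by simp
    qed
    then have "(\<Sum>l\<in>J. \<mu> l * R i l) = 0" using row_span_functional_zero[OF _ _ R_i] by simp
    then show False using \<mu>[OF i] j(2) by simp
  qed
qed

lemma card_brange_le:
  assumes T: "\<And>i j. T i j \<Longrightarrow> i < n \<and> j < n"
  defines "r \<equiv> rank_F2 n T"
  shows "card (brange n T) \<le> (\<Sum>k\<le>r. 2 ^ (k * (r - k) + r))"
proof -
  obtain J where J: "J \<subseteq> {..<n}" "card J = r"
    and basis: "\<And>j. j < n \<Longrightarrow> \<exists>\<mu>. \<forall>i<n. (of_bool (T i j) :: bit) = (\<Sum>l\<in>J. \<mu> l * of_bool (T i l))"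
    using rank_F2_column_basis[of n T] unfolding r_def by blast
  have "finite J" using J(1) finite_subset by blast
  define row where "row = (\<lambda>i l. if l \<in> J then of_bool (T i l) else 0 :: bit)"
  have "(\<Sum>l\<in>J. \<mu> l * row k l) = (\<Sum>l\<in>J. \<mu> l * of_bool (T k l))" for \<mu> k
    by (rule sum.cong) (simp_all add: row_def)
  then have col: "\<And>j. j < n \<Longrightarrow> \<exists>\<mu>. \<forall>k<n. (of_bool (T k j) :: bit) = (\<Sum>l\<in>J. \<mu> l * row k l)"
    using basis by (simp only:)
  define \<Phi> where "\<Phi> = (\<lambda>U. row_span row {k. k < n \<and> \<not> U k})"
  have "inj_on \<Phi> (brange n T)"
  proof (rule inj_onI)
    fix U U' assume U: "U \<in> brange n T" and U': "U' \<in> brange n T" and "\<Phi> U = \<Phi> U'"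
    then have "U i = U' i" if "i < n" for i
      using row_in_zero_row_span_iff[OF col U that] row_in_zero_row_span_iff[OF col U' that]
      by (simp add: \<Phi>_def)
    moreover have "\<not> U i" "\<not> U' i" if "\<not> i < n" for i
      using that U U' T unfolding brange_def by auto
    ultimately show "U = U'" by blast
  qed
  moreover have "\<Phi> ` brange n T \<subseteq> (\<Union>k\<le>r. f2_subspaces J k)"
  proof
    fix W assume "W \<in> \<Phi> ` brange n T"
    then have "f2_subspace J W"
      unfolding \<Phi>_def by (auto intro!: f2_subspace_row_span simp: row_def vecs_on_def)
    then show "W \<in> (\<Union>k\<le>r. f2_subspaces J k)"
      using card_f2_subspace[OF \<open>finite J\<close>] J(2) by (auto simp: f2_subspaces_def)
  qed
  ultimately have "card (brange n T) \<le> card (\<Union>k\<le>r. f2_subspaces J k)"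
    using finite_f2_subspaces[OF \<open>finite J\<close>]
    by (metis (no_types, lifting) card_image card_mono finite_UN finite_atMost)
  also have "\<dots> \<le> (\<Sum>k\<le>r. card (f2_subspaces J k))" by (rule card_UN_le) simp
  also have "\<dots> \<le> (\<Sum>k\<le>r. 2 ^ (k * (r - k) + r))"
    using card_f2_subspaces_le[OF \<open>finite J\<close>] J(2) by (intro sum_mono) simp
  finally show ?thesis .
qed

lemma quarter_square_bound:
  fixes k r :: nat
  shows "k * (r - k) \<le> r ^ 2 div 4"
proof (cases "k \<le> r")
  case True
  then obtain d where r: "r = k + d" using le_Suc_ex by blast
  have "(0::int) \<le> (int k - int d) ^ 2" by simp
  then have "int (k * d * 4) \<le> int ((k + d) ^ 2)" by (simp add: power2_eq_square algebra_simps)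
  then have "k * d * 4 \<le> (k + d) ^ 2" by (simp only: of_nat_le_iff)
  then show ?thesis by (simp add: r less_eq_div_iff_mult_less_eq)
qed simp

lemma sum_exp_le:
  "(\<Sum>k\<le>r. 2 ^ (k * (r - k) + r) :: nat) \<le> 2 ^ (r ^ 2 div 4 + 2 * r)"
proof -
  have "(\<Sum>k\<le>r. 2 ^ (k * (r - k) + r) :: nat) \<le> (\<Sum>k\<le>r. 2 ^ (r ^ 2 div 4 + r))"
    by (intro sum_mono power_increasing) (simp_all add: quarter_square_bound)
  also have "\<dots> = Suc r * 2 ^ (r ^ 2 div 4 + r)" by simp
  also have "\<dots> \<le> 2 ^ r * 2 ^ (r ^ 2 div 4 + r)" using Suc_leI[OF less_exp[of r]] by (rule mult_right_mono) simp
  also have "\<dots> = 2 ^ (r ^ 2 div 4 + 2 * r)" by (simp add: power_add[symmetric])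
  finally show ?thesis .
qed

lemma exp_quarter_square_le_powr:
  fixes \<epsilon> :: real
  assumes "0 < \<epsilon>" "\<epsilon> < 4"
  obtains C where "1 \<le> C" "\<And>r. real (2 ^ (r ^ 2 div 4 + 2 * r)) \<le> C * 2 powr (real r ^ 2 / (4 - \<epsilon>))"
proof
  define \<delta> where "\<delta> = 1 / (4 - \<epsilon>) - 1 / 4"
  have "0 < \<delta>" unfolding \<delta>_def using assms by (simp add: field_simps)
  then show "1 \<le> 2 powr (1 / \<delta>)" by (intro ge_one_powr_ge_zero) simp_all
  fix r :: nat
  have "real (r ^ 2 div 4) \<le> real r ^ 2 / 4"
    using times_div_less_eq_dividend[of 4 "r ^ 2"] by (simp add: field_simps flip: of_nat_mult of_nat_power)
  then have "real (2 ^ (r ^ 2 div 4 + 2 * r)) \<le> 2 powr (real r ^ 2 / 4 + 2 * real r)"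
    by (simp add: powr_realpow[symmetric])
  also have "\<dots> \<le> 2 powr (1 / \<delta> + real r ^ 2 / (4 - \<epsilon>))"
  proof (rule powr_mono)
    \<comment> \<open>AM-GM: \<open>2 r \<le> \<delta> r\<^sup>2 + 1 / \<delta>\<close>\<close>
    have "0 \<le> (\<delta> * real r - 1) ^ 2 / \<delta>" using \<open>0 < \<delta>\<close> by simp
    also have "\<dots> = \<delta> * real r ^ 2 + 1 / \<delta> - 2 * real r"
      using \<open>0 < \<delta>\<close> by (simp add: field_simps power2_eq_square)
    finally have "2 * real r \<le> \<delta> * real r ^ 2 + 1 / \<delta>" by simp
    moreover have "real r ^ 2 / (4 - \<epsilon>) = real r ^ 2 / 4 + \<delta> * real r ^ 2"
      unfolding \<delta>_def using assms(2) by (simp add: field_simps)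
    ultimately show "real r ^ 2 / 4 + 2 * real r \<le> 1 / \<delta> + real r ^ 2 / (4 - \<epsilon>)" by linarith
  qed simp
  also have "\<dots> = 2 powr (1 / \<delta>) * 2 powr (real r ^ 2 / (4 - \<epsilon>))" by (simp add: powr_add)
  finally show "real (2 ^ (r ^ 2 div 4 + 2 * r)) \<le> 2 powr (1 / \<delta>) * 2 powr (real r ^ 2 / (4 - \<epsilon>))" .
qed

lemma card_brange_le_powr:
  fixes \<epsilon> :: real
  assumes "0 < \<epsilon>" "\<epsilon> < 4"
  obtains C where "1 \<le> C"
    "\<And>n T. (\<And>i j. T i j \<Longrightarrow> i < n \<and> j < n) \<Longrightarrow>
      real (card (brange n T)) \<le> C * 2 powr (real (rank_F2 n T) ^ 2 / (4 - \<epsilon>))"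
proof -
  obtain C where C: "1 \<le> C" "\<And>r. real (2 ^ (r ^ 2 div 4 + 2 * r)) \<le> C * 2 powr (real r ^ 2 / (4 - \<epsilon>))"
    using exp_quarter_square_le_powr[OF assms] by blast
  show thesis
  proof (rule that[OF C(1)])
    fix n :: nat and T :: bmat assume "\<And>i j. T i j \<Longrightarrow> i < n \<and> j < n"
    then have "card (brange n T) \<le> 2 ^ (rank_F2 n T ^ 2 div 4 + 2 * rank_F2 n T)"
      using card_brange_le sum_exp_le order_trans by blast
    then have "real (card (brange n T)) \<le> real (2 ^ (rank_F2 n T ^ 2 div 4 + 2 * rank_F2 n T))"
      by (simp only: of_nat_le_iff)
    also have "\<dots> \<le> C * 2 powr (real (rank_F2 n T) ^ 2 / (4 - \<epsilon>))" by (rule C(2))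
    finally show "real (card (brange n T)) \<le> C * 2 powr (real (rank_F2 n T) ^ 2 / (4 - \<epsilon>))" .
  qed
qed

lemma trans_mat_bounded: "nfa n \<Sigma> I F \<delta> \<Longrightarrow> trans_mat \<delta> w i j \<Longrightarrow> i < n \<and> j < n"
  by (auto simp: nfa_def trans_mat_def)

lemma subset_complexity_le_singleton:
  assumes "nfa n \<Sigma> I F \<delta>" "a \<in> \<Sigma>"
  shows "subset_complexity n \<Sigma> \<delta>
    \<le> (1 + (\<Sum>b\<in>\<Sigma> - {a}. card (brange n (trans_mat \<delta> b)))) * card (bmonoid n {trans_mat \<delta> a})"
  unfolding subset_complexity_def using assms by (intro Min_le rev_image_eqI[of "{a}"]) (auto simp: nfa_def)

lemma one_plus_sum_le:
  fixes f :: "'a \<Rightarrow> real"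
  assumes "finite S" "a \<in> S" "1 \<le> X" "\<And>b. b \<in> S - {a} \<Longrightarrow> f b \<le> X"
  shows "1 + (\<Sum>b\<in>S - {a}. f b) \<le> real (card S) * X"
proof -
  have "(\<Sum>b\<in>S - {a}. f b) \<le> real (card (S - {a})) * X"
    using sum_bounded_above[of "S - {a}" f X] assms(4) by simp
  moreover have "real (card S) = real (card (S - {a})) + 1" using card.remove[OF assms(1,2)] by simp
  ultimately show ?thesis using assms(3) by (simp add: algebra_simps)
qed

lemma subset_complexity_le:
  assumes nfa: "nfa n \<Sigma> I F \<delta>" and a: "a \<in> \<Sigma>" and "1 \<le> X"
    and range: "\<And>b. b \<in> \<Sigma> - {a} \<Longrightarrow> real (card (brange n (trans_mat \<delta> b))) \<le> X"
  shows "real (subset_complexity n \<Sigma> \<delta>)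
    \<le> 35 * real (card \<Sigma>) * real (cyclicity n (trans_mat \<delta> a) + n ^ 2) * X"
proof -
  let ?R = "1 + (\<Sum>b\<in>\<Sigma> - {a}. card (brange n (trans_mat \<delta> b)))"
  and ?M = "bmonoid n {trans_mat \<delta> a}" and ?c = "cyclicity n (trans_mat \<delta> a)"
  have "finite \<Sigma>" using nfa by (simp add: nfa_def)
  then have R: "real ?R \<le> real (card \<Sigma>) * X" using one_plus_sum_le[OF _ a \<open>1 \<le> X\<close>] range by simp
  have "card ?M \<le> 35 * (?c + n ^ 2)"
    using card_bmonoid_singleton_le[of "trans_mat \<delta> a" n] trans_mat_bounded[OF nfa]
    by (simp add: power2_eq_square)
  then have M: "real (card ?M) \<le> 35 * real (?c + n ^ 2)" by (metis of_nat_le_iff of_nat_mult of_nat_numeral)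
  have "real (subset_complexity n \<Sigma> \<delta>) \<le> real ?R * real (card ?M)"
    using subset_complexity_le_singleton[OF nfa a] by (simp only: of_nat_le_iff flip: of_nat_mult)
  also have "\<dots> \<le> (real (card \<Sigma>) * X) * (35 * real (?c + n ^ 2))"
    by (rule mult_mono[OF R M]) (use \<open>1 \<le> X\<close> in auto)
  also have "\<dots> = 35 * real (card \<Sigma>) * real (?c + n ^ 2) * X" by (simp only: ac_simps)
  finally show ?thesis .
qed

lemma subset_complexity_le_Max:
  fixes g :: "nat \<Rightarrow> real"
  assumes nfa: "nfa n \<Sigma> I F \<delta>" and a: "a \<in> \<Sigma>" and C: "1 \<le> C"
    and range: "\<And>b. b \<in> \<Sigma> - {a} \<Longrightarrow> real (card (brange n (trans_mat \<delta> b))) \<le> C * g b"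
  shows "real (subset_complexity n \<Sigma> \<delta>)
    \<le> 35 * C * real (card \<Sigma>) * real (cyclicity n (trans_mat \<delta> a) + n ^ 2) * Max (insert 1 (g ` (\<Sigma> - {a})))"
proof -
  define M where "M = Max (insert 1 (g ` (\<Sigma> - {a})))"
  have fin: "finite (insert 1 (g ` (\<Sigma> - {a})))" using nfa by (simp add: nfa_def)
  have "1 \<le> M" unfolding M_def using fin by (rule Max_ge) simp
  have "real (card (brange n (trans_mat \<delta> b))) \<le> C * M" if b: "b \<in> \<Sigma> - {a}" for b
  proof -
    have "g b \<le> M" unfolding M_def using fin by (rule Max_ge) (use b in blast)
    then have "C * g b \<le> C * M" using C by simp
    then show ?thesis using range[OF b] by linarith
  qed
  with subset_complexity_le[OF nfa a mult_ge1_I[OF C \<open>1 \<le> M\<close>]]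
  have "real (subset_complexity n \<Sigma> \<delta>)
      \<le> 35 * real (card \<Sigma>) * real (cyclicity n (trans_mat \<delta> a) + n ^ 2) * (C * M)" .
  then show ?thesis unfolding M_def by (simp only: ac_simps)
qed

theorem proposition3:
  fixes \<epsilon> :: real
  assumes "0 < \<epsilon>" and "\<epsilon> < 4"
  shows "\<exists>C::real. \<forall>(n::nat) (\<Sigma>::nat set) I F \<delta> a.
           nfa n \<Sigma> I F \<delta> \<longrightarrow> a \<in> \<Sigma> \<longrightarrow>
           real (subset_complexity n \<Sigma> \<delta>)
             \<le> C * real (card \<Sigma>) * real (cyclicity n (trans_mat \<delta> a) + n ^ 2)
                 * Max (insert 1 ((\<lambda>b. 2 powr (real (rank_F2 n (trans_mat \<delta> b)) ^ 2 / (4 - \<epsilon>)))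
                                   ` (\<Sigma> - {a})))"
proof -
  obtain C where C: "1 \<le> C"
    "\<And>n T. (\<And>i j. T i j \<Longrightarrow> i < n \<and> j < n) \<Longrightarrow>
      real (card (brange n T)) \<le> C * 2 powr (real (rank_F2 n T) ^ 2 / (4 - \<epsilon>))"
    using card_brange_le_powr[OF assms] by blast
  show ?thesis
  proof (intro exI[of _ "35 * C"] allI impI)
    fix n \<Sigma> I F \<delta> a assume nfa: "nfa n \<Sigma> I F (\<delta> :: (nat \<times> nat \<times> nat) set)" and "a \<in> \<Sigma>"
    then show "real (subset_complexity n \<Sigma> \<delta>)
      \<le> 35 * C * real (card \<Sigma>) * real (cyclicity n (trans_mat \<delta> a) + n ^ 2)
        * Max (insert 1 ((\<lambda>b. 2 powr (real (rank_F2 n (trans_mat \<delta> b)) ^ 2 / (4 - \<epsilon>))) ` (\<Sigma> - {a})))"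
      by (intro subset_complexity_le_Max C(1) C(2) trans_mat_bounded[OF nfa])
  qed
qed

end
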